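(* The set $R_{1,1,1}$ of Riordan matrices whose $A$-sequence has the form $(1,a_1,a_2,\ldots)$ and whose $Z$-sequence has the form $(z_0,0,z_2,\ldots)$ with $z_0=a_1$ (i.e. $a_0=1$, $z_0=a_1$, $z_1=0$) is a subgroup of the Riordan group.
   Context: Let $K$ be $\mathbb{R}$ or $\mathbb{C}$. A (proper) Riordan matrix is a pair $(g,f)$ of formal power series in $K[[t]]$ with $g(0)=1$, $f(0)=0$, $f'(0)\neq 0$ (the normalization $g(0)=1$ is a standing assumption), identified with the lower triangular matrix with entries $[t^n]g(t)f(t)^k$. The Riordan group is the set of these matrices under matrix multiplication, $(g_1,f_1)(g_2,f_2)=(g_1\,g_2(f_1),\,f_2(f_1))$, with identity $(1,t)$. The $A$-sequence $(a_j)$ of $(g,f)$ is the unique sequence whose generating function $A(t)$ satisfies $f(t)=tA(f(t))$; the $Z$-sequence $(z_j)$ is the unique sequence whose generating function $Z(t)$ satisfies $g(t)=1/(1-tZ(f(t)))$. *)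

theory Defs
  imports "HOL-Computational_Algebra.Formal_Power_Series" "HOL-Algebra.Group"
begin

text \<open>A (proper) Riordan matrix is represented by the pair (g, f) of formal power series.\<close>

definition riordan_pair :: "('a::field fps \<times> 'a fps) \<Rightarrow> bool" where
  "riordan_pair p \<longleftrightarrow> fps_nth (fst p) 0 = 1 \<and> fps_nth (snd p) 0 = 0 \<and> fps_nth (snd p) 1 \<noteq> 0"

definition riordan_mult :: "('a::field fps \<times> 'a fps) \<Rightarrow> ('a fps \<times> 'a fps) \<Rightarrow> ('a fps \<times> 'a fps)" where
  "riordan_mult p q = (fst p * (fst q oo snd p), snd q oo snd p)"

definition riordan_group :: "('a::field fps \<times> 'a fps) monoid" where
  "riordan_group = \<lparr>carrier = {p. riordan_pair p}, mult = riordan_mult, one = (1, fps_X)\<rparr>"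

definition A_seq :: "('a::field fps \<times> 'a fps) \<Rightarrow> 'a fps" where
  "A_seq p = (THE A. snd p = fps_X * (A oo snd p))"

definition Z_seq :: "('a::field fps \<times> 'a fps) \<Rightarrow> 'a fps" where
  "Z_seq p = (THE Z. fst p = inverse (1 - fps_X * (Z oo snd p)))"

definition R111 :: "('a::field fps \<times> 'a fps) set" where
  "R111 = {p. riordan_pair p \<and> fps_nth (A_seq p) 0 = 1
              \<and> fps_nth (Z_seq p) 0 = fps_nth (A_seq p) 1 \<and> fps_nth (Z_seq p) 1 = 0}"

end

theory Submission
  imports Defs
begin

text \<open>
  For a Riordan pair (g, f) the equations f = t A(f) and 1 - 1/g = t Z(f) determine the A- and
  Z-sequences uniquely, and comparing the coefficients of t and t^2 gives a_0 = f_1,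
  a_1 f_1 = f_2, z_0 = g_1 and z_1 f_1 = g_2 - g_1^2. Hence R_{1,1,1} is cut out by
  f_1 = 1, g_1 = f_2 and g_2 = g_1^2, conditions on coefficients of order at most two only.
  These coefficients of a product depend only on those of the factors, and a polynomial
  computation shows that the conditions hold for p q when they hold for p and q, and for q when
  they hold for p and p q; taking q the inverse of p gives closure under inverses.
\<close>

unbundle fps_syntax

lemma fps_compose_nth_1:
  fixes f :: "'a::comm_semiring_1 fps"
  assumes "f $ 0 = 0"
  shows "(W oo f) $ 1 = W $ 1 * f $ 1"
  using assms by (simp add: fps_compose_nth)

lemma fps_compose_nth_2:
  fixes f :: "'a::comm_semiring_1 fps"
  assumes "f $ 0 = 0"
  shows "(W oo f) $ 2 = W $ 1 * f $ 2 + W $ 2 * (f $ 1)\<^sup>2"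
  using assms by (simp add: fps_compose_nth numeral_2_eq_2 fps_mult_nth power2_eq_square)

lemma fps_mult_nth_2:
  fixes f g :: "'a::comm_semiring_1 fps"
  shows "(f * g) $ 2 = f $ 0 * g $ 2 + f $ 1 * g $ 1 + f $ 2 * g $ 0"
  by (simp add: fps_mult_nth numeral_2_eq_2)

lemma fps_inverse_nth_1_2:
  fixes g :: "'a::field fps"
  assumes "g $ 0 = 1"
  shows "inverse g $ 1 = - g $ 1" "inverse g $ 2 = (g $ 1)\<^sup>2 - g $ 2"
proof -
  have "g * inverse g = 1" using assms by (simp add: inverse_mult_eq_1')
  then have "(g * inverse g) $ 1 = 0" "(g * inverse g) $ 2 = 0" by simp_all
  then have c1: "g $ 1 + inverse g $ 1 = 0"
    and c2: "g $ 2 + g $ 1 * inverse g $ 1 + inverse g $ 2 = 0"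
    using assms by (simp_all add: fps_mult_nth_1 fps_mult_nth_2 algebra_simps)
  from c1 show i1: "inverse g $ 1 = - g $ 1"
    by (simp add: add_eq_0_iff)
  from c2 show "inverse g $ 2 = (g $ 1)\<^sup>2 - g $ 2"
    unfolding i1 by (simp add: power2_eq_square add_eq_0_iff2 algebra_simps)
qed

lemma fps_inv_nth_0: "fps_inv (f :: 'a::field fps) $ 0 = 0"
  by (simp add: fps_inv_def)

lemma fps_inv_nth_1:
  fixes f :: "'a::field fps"
  assumes "f $ 0 = 0" "f $ 1 \<noteq> 0"
  shows "fps_inv f $ 1 = inverse (f $ 1)"
proof -
  have "f $ 1 * fps_inv f $ 1 = 1"
    using fps_compose_nth_1[of "fps_inv f" f, OF fps_inv_nth_0] fps_inv_right[OF assms] by simp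
  with assms(2) show ?thesis by (simp add: field_simps)
qed

text \<open>Both the A- and the Z-sequence are instances, with h = f and h = 1 - 1/g.\<close>

lemma ex1_fps_X_mult_compose:
  fixes f h :: "'a::field fps"
  assumes f0: "f $ 0 = 0" and f1: "f $ 1 \<noteq> 0" and h0: "h $ 0 = 0"
  shows "\<exists>!W. h = fps_X * (W oo f)"
proof (rule ex1I)
  have "fps_shift 1 h oo fps_inv f oo f = fps_shift 1 h"
    using fps_inv[OF f0 f1] by (simp add: fps_compose_assoc[OF f0 fps_inv_nth_0, symmetric])
  moreover have "fps_X * fps_shift 1 h = h"
    using h0 by (intro fps_ext) simp
  ultimately show witness: "h = fps_X * (fps_shift 1 h oo fps_inv f oo f)"
    by simp
  fix W assume "h = fps_X * (W oo f)"
  with witness show "W = fps_shift 1 h oo fps_inv f"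
    using fps_compose_inj_right[OF f0 f1] by simp
qed

lemma fps_X_mult_compose_nth:
  fixes f W :: "'a::comm_semiring_1 fps"
  assumes "f $ 0 = 0" and "h = fps_X * (W oo f)"
  shows "W $ 0 = h $ 1" "W $ 1 * f $ 1 = h $ 2"
  using assms by (simp_all add: numeral_2_eq_2 fps_compose_nth mult.commute)

lemma A_seq_eq:
  assumes "riordan_pair p"
  shows "snd p = fps_X * (A_seq p oo snd p)"
  unfolding A_seq_def
  by (rule theI', rule ex1_fps_X_mult_compose) (use assms in \<open>auto simp: riordan_pair_def\<close>)

lemma Z_seq_eq:
  assumes "riordan_pair p"
  shows "1 - inverse (fst p) = fps_X * (Z_seq p oo snd p)"
proof -
  have g0: "fst p $ 0 = 1"
    using assms by (simp add: riordan_pair_def)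
  have inverse_swap: "fst p = inverse u \<longleftrightarrow> inverse (fst p) = u" if "u $ 0 \<noteq> 0" for u
    using g0 that fps_inverse_idempotent by force
  have "fst p = inverse (1 - fps_X * (Z oo snd p)) \<longleftrightarrow> 1 - inverse (fst p) = fps_X * (Z oo snd p)"
    for Z
    by (subst inverse_swap) (auto simp: algebra_simps)
  moreover have "1 - inverse (fst p) = fps_X * ((THE Z. 1 - inverse (fst p) = fps_X * (Z oo snd p)) oo snd p)"
    by (rule theI', rule ex1_fps_X_mult_compose) (use assms in \<open>auto simp: riordan_pair_def\<close>)
  ultimately show ?thesis
    unfolding Z_seq_def by simp
qed

lemma A_seq_nth:
  assumes "riordan_pair p"
  shows "A_seq p $ 0 = snd p $ 1" "A_seq p $ 1 * snd p $ 1 = snd p $ 2"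
  using fps_X_mult_compose_nth[OF _ A_seq_eq[OF assms]] assms by (simp_all add: riordan_pair_def)

lemma Z_seq_nth:
  assumes "riordan_pair p"
  shows "Z_seq p $ 0 = fst p $ 1" "Z_seq p $ 1 * snd p $ 1 = fst p $ 2 - (fst p $ 1)\<^sup>2"
  using fps_X_mult_compose_nth[OF _ Z_seq_eq[OF assms]] fps_inverse_nth_1_2[of "fst p"] assms
  by (simp_all add: riordan_pair_def)

lemma mem_R111_iff:
  "p \<in> R111 \<longleftrightarrow>
     riordan_pair p \<and> snd p $ 1 = 1 \<and> fst p $ 1 = snd p $ 2 \<and> fst p $ 2 = (fst p $ 1)\<^sup>2"
proof (cases "riordan_pair p")
  case True
  then have "snd p $ 1 \<noteq> 0"
    by (simp add: riordan_pair_def)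
  then show ?thesis
    using True A_seq_nth[OF True] Z_seq_nth[OF True] unfolding R111_def
    by (auto simp: field_simps)
qed (simp add: R111_def)

lemma riordan_pair_mult:
  assumes "riordan_pair p" "riordan_pair q"
  shows "riordan_pair (riordan_mult p q)"
  using assms fps_compose_nth_1[of "snd p" "snd q"]
  by (simp add: riordan_pair_def riordan_mult_def)

lemma riordan_mult_nth:
  assumes "riordan_pair p" "riordan_pair q"
  shows "snd (riordan_mult p q) $ 1 = snd q $ 1 * snd p $ 1"
    and "snd (riordan_mult p q) $ 2 = snd q $ 1 * snd p $ 2 + snd q $ 2 * (snd p $ 1)\<^sup>2"
    and "fst (riordan_mult p q) $ 1 = fst p $ 1 + fst q $ 1 * snd p $ 1"
    and "fst (riordan_mult p q) $ 2 = fst p $ 2 + fst p $ 1 * fst q $ 1 * snd p $ 1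
           + fst q $ 1 * snd p $ 2 + fst q $ 2 * (snd p $ 1)\<^sup>2"
  using assms fps_compose_nth_1[of "snd p"] fps_compose_nth_2[of "snd p"]
  by (simp_all add: riordan_pair_def riordan_mult_def fps_mult_nth_1 fps_mult_nth_2 algebra_simps)

definition riordan_inverse :: "'a::field fps \<times> 'a fps \<Rightarrow> 'a fps \<times> 'a fps" where
  "riordan_inverse p = (inverse (fst p oo fps_inv (snd p)), fps_inv (snd p))"

lemma riordan_pair_inverse:
  assumes "riordan_pair p"
  shows "riordan_pair (riordan_inverse p)"
  using assms fps_inv_nth_1[of "snd p"]
  by (simp add: riordan_pair_def riordan_inverse_def fps_inv_nth_0)

lemma riordan_mult_inverse_left:
  assumes "riordan_pair p"
  shows "riordan_mult (riordan_inverse p) p = (1, fps_X)"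
proof -
  have f0: "snd p $ 0 = 0" and f1: "snd p $ 1 \<noteq> 0" and g0: "fst p $ 0 = 1"
    using assms by (simp_all add: riordan_pair_def)
  then show ?thesis
    by (simp add: riordan_mult_def riordan_inverse_def fps_inv_right[OF f0 f1] inverse_mult_eq_1)
qed

lemma riordan_mult_assoc:
  assumes "riordan_pair p" "riordan_pair q"
  shows "riordan_mult (riordan_mult p q) r = riordan_mult p (riordan_mult q r)"
proof -
  have p0: "snd p $ 0 = 0" and q0: "snd q $ 0 = 0"
    using assms by (simp_all add: riordan_pair_def)
  show ?thesis
    by (simp add: riordan_mult_def fps_compose_mult_distrib[OF p0] fps_compose_assoc[OF p0 q0]
        mult.assoc)
qed

lemma riordan_group_simps [simp]:
  "carrier riordan_group = {p. riordan_pair p}"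
  "p \<otimes>\<^bsub>riordan_group\<^esub> q = riordan_mult p q"
  "\<one>\<^bsub>riordan_group\<^esub> = (1, fps_X)"
  by (simp_all add: riordan_group_def)

lemma group_riordan_group: "group (riordan_group :: ('a::field fps \<times> 'a fps) monoid)"
proof (rule groupI)
  show "\<one>\<^bsub>riordan_group\<^esub> \<in> carrier (riordan_group :: ('a fps \<times> 'a fps) monoid)"
    by (simp add: riordan_pair_def)
next
  fix p q r :: "'a fps \<times> 'a fps"
  assume "p \<in> carrier riordan_group" "q \<in> carrier riordan_group"
  then have p: "riordan_pair p" and q: "riordan_pair q"
    by simp_all
  then show "p \<otimes>\<^bsub>riordan_group\<^esub> q \<in> carrier riordan_group"
    by (simp add: riordan_pair_mult)
  show "p \<otimes>\<^bsub>riordan_group\<^esub> q \<otimes>\<^bsub>riordan_group\<^esub> r =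
      p \<otimes>\<^bsub>riordan_group\<^esub> (q \<otimes>\<^bsub>riordan_group\<^esub> r)"
    by (simp add: riordan_mult_assoc[OF p q])
  show "\<one>\<^bsub>riordan_group\<^esub> \<otimes>\<^bsub>riordan_group\<^esub> p = p"
    by (simp add: riordan_mult_def)
  show "\<exists>p' \<in> carrier riordan_group. p' \<otimes>\<^bsub>riordan_group\<^esub> p = \<one>\<^bsub>riordan_group\<^esub>"
    by (intro bexI[of _ "riordan_inverse p"])
      (simp_all add: riordan_pair_inverse riordan_mult_inverse_left p)
qed

lemma R111_mult_closed:
  assumes "p \<in> R111" "q \<in> R111"
  shows "riordan_mult p q \<in> R111"
proof -
  have p: "riordan_pair p" and q: "riordan_pair q"
    using assms by (simp_all add: mem_R111_iff)
  from assms show ?thesis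
    unfolding mem_R111_iff riordan_mult_nth[OF p q]
    by (simp add: riordan_pair_mult[OF p q] power2_eq_square algebra_simps)
qed

lemma R111_mult_cancel_left:
  assumes "p \<in> R111" "riordan_pair q" "riordan_mult p q \<in> R111"
  shows "q \<in> R111"
proof -
  have p: "riordan_pair p" and f1: "snd p $ 1 = 1" and g1: "fst p $ 1 = snd p $ 2"
    and g2: "fst p $ 2 = (fst p $ 1)\<^sup>2"
    using assms(1) by (simp_all add: mem_R111_iff)
  from assms(3) have q1: "snd q $ 1 = 1"
    and c2: "fst p $ 1 + fst q $ 1 = snd q $ 1 * snd p $ 2 + snd q $ 2"
    and c3: "fst p $ 2 + fst p $ 1 * fst q $ 1 + fst q $ 1 * snd p $ 2 + fst q $ 2
               = (fst p $ 1 + fst q $ 1)\<^sup>2"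
    unfolding mem_R111_iff riordan_mult_nth[OF p assms(2)] f1 by simp_all
  have q2: "fst q $ 1 = snd q $ 2"
    using c2 g1 q1 by simp
  have "fst q $ 2 = (fst q $ 1)\<^sup>2"
    using c3 g1 g2 by (simp add: power2_eq_square algebra_simps)
  with assms(2) q1 q2 show ?thesis
    by (simp add: mem_R111_iff)
qed

lemma subgroup_R111: "subgroup (R111 :: ('a::field fps \<times> 'a fps) set) riordan_group"
proof -
  interpret riordan: group "riordan_group :: ('a fps \<times> 'a fps) monoid"
    by (rule group_riordan_group)
  have one: "(1, fps_X) \<in> (R111 :: ('a fps \<times> 'a fps) set)"
    by (simp add: mem_R111_iff riordan_pair_def)
  show ?thesis
  proof (rule riordan.subgroupI)
    show "(R111 :: ('a fps \<times> 'a fps) set) \<subseteq> carrier riordan_group"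
      by (auto simp: R111_def)
    show "(R111 :: ('a fps \<times> 'a fps) set) \<noteq> {}"
      using one by blast
  next
    fix p q :: "'a fps \<times> 'a fps"
    assume "p \<in> R111" "q \<in> R111"
    then show "p \<otimes>\<^bsub>riordan_group\<^esub> q \<in> R111"
      by (simp add: R111_mult_closed)
  next
    fix p :: "'a fps \<times> 'a fps"
    assume p: "p \<in> R111"
    then have "p \<in> carrier riordan_group"
      by (simp add: mem_R111_iff)
    then have "riordan_pair (inv\<^bsub>riordan_group\<^esub> p)"
      and "riordan_mult p (inv\<^bsub>riordan_group\<^esub> p) \<in> R111"
      using riordan.inv_closed riordan.r_inv one by simp_all
    with p show "inv\<^bsub>riordan_group\<^esub> p \<in> R111"
      by (rule R111_mult_cancel_left)
  qed
qed

theorem theorem4p4: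
  shows "(group (riordan_group :: (real fps \<times> real fps) monoid)
           \<and> subgroup (R111 :: (real fps \<times> real fps) set) riordan_group)
       \<and> (group (riordan_group :: (complex fps \<times> complex fps) monoid)
           \<and> subgroup (R111 :: (complex fps \<times> complex fps) set) riordan_group)"
  by (intro conjI group_riordan_group subgroup_R111)

end
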